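(* Let $M,n,d\in\mathbb{N}$ and let ${\bm{x}}_i^m\in\mathbb{R}^d$ ($m\in[M]$, $i\in[n]$) satisfy $\|{\bm{x}}_i^m\|\le 1$, and assume the data are linearly separable, i.e. there is ${\bm{w}}$ with $\langle {\bm{w}},{\bm{x}}_i^m\rangle>0$ for all $m,i$. Let $\gamma=\max_{\|{\bm{w}}\|=1}\min_{m,i}\langle {\bm{w}},{\bm{x}}_i^m\rangle>0$. Let $\ell(z)=\log(1+e^{-z})$, $F_m({\bm{w}})=\frac1n\sum_{i=1}^n\ell(\langle {\bm{w}},{\bm{x}}_i^m\rangle)$, $F=\frac1M\sum_{m=1}^M F_m$. Run Local GD with arbitrary initialization ${\bm{w}}_0\in\mathbb{R}^d$, any stepsize $\eta>0$ and any number of local steps $K\in\mathbb{N}$: for each round $r\ge 0$ and each $m\in[M]$, set ${\bm{w}}_{r,0}^m={\bm{w}}_r$, ${\bm{w}}_{r,k+1}^m={\bm{w}}_{r,k}^m-\eta\nabla F_m({\bm{w}}_{r,k}^m)$ for $k=0,\dots,K-1$, and ${\bm{w}}_{r+1}=\frac1M\sum_{m=1}^M{\bm{w}}_{r,K}^m$. Then for every integer $r\ge 1$, $$\frac1r\sum_{s=0}^{r-1}F({\bm{w}}_s)\le 26\,\frac{\|{\bm{w}}_0\|^2+1+\log^2(K+\eta K\gamma^2 r)+\eta^2K^2}{\eta\gamma^4 r}.$$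
   Context: This is a distributed logistic regression problem where labels have been absorbed into the data (each data point is ${\bm{x}}_i^m$ with label $+1$). $\|\cdot\|$ is the Euclidean norm. *)

theory Defs
  imports "HOL-Analysis.Analysis"
begin

definition logistic :: "real \<Rightarrow> real" where
  "logistic z = ln (1 + exp (- z))"

definition Floc :: "nat \<Rightarrow> (nat \<Rightarrow> nat \<Rightarrow> real^'d) \<Rightarrow> nat \<Rightarrow> real^'d \<Rightarrow> real" where
  "Floc n x m w = (1 / real n) * (\<Sum>i<n. logistic (w \<bullet> x m i))"

definition Fglob :: "nat \<Rightarrow> nat \<Rightarrow> (nat \<Rightarrow> nat \<Rightarrow> real^'d) \<Rightarrow> real^'d \<Rightarrow> real" where
  "Fglob M n x w = (1 / real M) * (\<Sum>m<M. Floc n x m w)"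

definition grad :: "(real^'d \<Rightarrow> real) \<Rightarrow> real^'d \<Rightarrow> real^'d" where
  "grad f w = (THE g. (f has_derivative (\<lambda>h. g \<bullet> h)) (at w))"

definition margin :: "nat \<Rightarrow> nat \<Rightarrow> (nat \<Rightarrow> nat \<Rightarrow> real^'d) \<Rightarrow> real" where
  "margin M n x = (SUP w\<in>{w. norm w = 1}. Min {w \<bullet> x m i | m i. m < M \<and> i < n})"

fun local_iter :: "nat \<Rightarrow> (nat \<Rightarrow> nat \<Rightarrow> real^'d) \<Rightarrow> real \<Rightarrow> nat \<Rightarrow> real^'d \<Rightarrow> nat \<Rightarrow> real^'d" where
  "local_iter n x \<eta> m w 0 = w"
| "local_iter n x \<eta> m w (Suc k) =
     local_iter n x \<eta> m w k - \<eta> *\<^sub>R grad (Floc n x m) (local_iter n x \<eta> m w k)"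

fun localGD :: "nat \<Rightarrow> nat \<Rightarrow> (nat \<Rightarrow> nat \<Rightarrow> real^'d) \<Rightarrow> real \<Rightarrow> nat \<Rightarrow> real^'d \<Rightarrow> nat \<Rightarrow> real^'d" where
  "localGD M n x \<eta> K w0 0 = w0"
| "localGD M n x \<eta> K w0 (Suc r) =
     (1 / real M) *\<^sub>R (\<Sum>m<M. local_iter n x \<eta> m (localGD M n x \<eta> K w0 r) K)"

end

theory Submission
  imports Defs
begin

text \<open>
  Fix a unit vector \<open>v\<close> with margin \<open>\<gamma>\<close> on all data and compare the iterates with
  \<open>u = \<rho> v + (\<eta> / (2 \<gamma>)) v\<close>. Because \<open>|dlogistic| \<le> 1\<close> and \<open>\<parallel>x\<parallel> \<le> 1\<close>, every local gradient is
  self-bounding: \<open>\<gamma> \<parallel>\<nabla>F\<^sub>m w\<parallel>\<^sup>2 \<le> - \<langle>\<nabla>F\<^sub>m w, v\<rangle>\<close>. The shift \<open>\<eta> / (2 \<gamma>)\<close> of the comparator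
  therefore absorbs the second-order term of a gradient step, and convexity gives, for every
  stepsize, \<open>\<parallel>w - \<eta> \<nabla>F\<^sub>m w - u\<parallel>\<^sup>2 \<le> \<parallel>w - u\<parallel>\<^sup>2 - 2 \<eta> (F\<^sub>m w - F\<^sub>m (\<rho> v))\<close>.
  Averaging the clients does not increase the squared distance to \<open>u\<close>, so telescoping over
  rounds bounds \<open>2 \<eta> \<Sum>\<^sub>s F w\<^sub>s\<close> by \<open>\<parallel>w\<^sub>0 - u\<parallel>\<^sup>2 + 2 \<eta> K r F (\<rho> v)\<close>, where
  \<open>F (\<rho> v) \<le> exp (- \<rho> \<gamma>)\<close>. The choice \<open>\<rho> = log (K + \<eta> K \<gamma>\<^sup>2 r) / \<gamma>\<close> balances the two terms.
\<close>

definition dlogistic :: "real \<Rightarrow> real" where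
  "dlogistic z = - 1 / (1 + exp z)"

lemma logistic_has_real_derivative: "(logistic has_real_derivative dlogistic z) (at z)"
proof -
  have "((\<lambda>z. ln (1 + exp (- z))) has_real_derivative (1 / (1 + exp (-z))) * (exp (-z) * (-1))) (at z)"
    by (auto intro!: derivative_eq_intros simp: add_pos_pos)
  moreover have "(1 / (1 + exp (-z))) * (exp (-z) * (-1)) = dlogistic z"
    unfolding dlogistic_def by (simp add: field_simps exp_minus)
  ultimately show ?thesis unfolding logistic_def[abs_def] by simp
qed

lemma dlogistic_ge_minus_one: "- 1 \<le> dlogistic z"
  and dlogistic_neg: "dlogistic z < 0"
  unfolding dlogistic_def by (auto simp: divide_simps add_pos_pos)

lemma logistic_tangent_le: "logistic a + dlogistic a * (b - a) \<le> logistic b"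
proof -
  have "convex_on UNIV logistic"
  proof (rule convex_on_realI[where f'=dlogistic])
    show "(logistic has_real_derivative dlogistic x) (at x)" for x
      by (rule logistic_has_real_derivative)
  qed (auto simp: dlogistic_def divide_simps add_pos_pos)
  from convex_on_imp_above_tangent[OF this]
  have "dlogistic a * (b - a) \<le> logistic b - logistic a"
    by (auto intro: has_field_derivative_at_within logistic_has_real_derivative)
  thus ?thesis by simp
qed

lemma logistic_nonneg: "0 \<le> logistic z"
  unfolding logistic_def by simp

lemma logistic_le_exp: "logistic z \<le> exp (- z)"
  unfolding logistic_def by (rule ln_add_one_self_le_self) simp

lemma grad_eqI:
  assumes "(f has_derivative (\<lambda>h. g \<bullet> h)) (at w)"
  shows "grad f w = g"
  unfolding grad_def
proof (rule the_equality)
  fix g' assume "(f has_derivative (\<lambda>h. g' \<bullet> h)) (at w)"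
  from has_derivative_unique[OF this assms]
  have "g' \<bullet> (g' - g) = g \<bullet> (g' - g)" by metis
  hence "(g' - g) \<bullet> (g' - g) = 0" by (simp add: inner_diff_left)
  thus "g' = g" by simp
qed (rule assms)

definition Floc_grad :: "nat \<Rightarrow> (nat \<Rightarrow> nat \<Rightarrow> real^'d) \<Rightarrow> nat \<Rightarrow> real^'d \<Rightarrow> real^'d" where
  "Floc_grad n x m w = (1 / real n) *\<^sub>R (\<Sum>i<n. dlogistic (w \<bullet> x m i) *\<^sub>R x m i)"

lemma Floc_grad_inner:
  "Floc_grad n x m w \<bullet> v = (1 / real n) * (\<Sum>i<n. dlogistic (w \<bullet> x m i) * (x m i \<bullet> v))"
  unfolding Floc_grad_def by (simp add: inner_sum_left)

lemma Floc_has_derivative: "(Floc n x m has_derivative (\<lambda>h. Floc_grad n x m w \<bullet> h)) (at w)"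
proof -
  have "((\<lambda>w. logistic (w \<bullet> x m i)) has_derivative (\<lambda>h. dlogistic (w \<bullet> x m i) * (h \<bullet> x m i))) (at w)"
    for i
    using diff_chain_at[OF bounded_linear_inner_left[THEN bounded_linear_imp_has_derivative]
        logistic_has_real_derivative[unfolded has_field_derivative_def]]
    by (simp add: o_def)
  hence "(Floc n x m has_derivative
          (\<lambda>h. (1 / real n) * (\<Sum>i<n. dlogistic (w \<bullet> x m i) * (h \<bullet> x m i)))) (at w)"
    unfolding Floc_def[abs_def] by (intro has_derivative_mult_right has_derivative_sum)
  moreover have "(\<lambda>h. (1 / real n) * (\<Sum>i<n. dlogistic (w \<bullet> x m i) * (h \<bullet> x m i)))
                = (\<lambda>h. Floc_grad n x m w \<bullet> h)"
    unfolding Floc_grad_inner by (simp add: inner_commute)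
  ultimately show ?thesis by simp
qed

lemma grad_Floc: "grad (Floc n x m) w = Floc_grad n x m w"
  by (rule grad_eqI[OF Floc_has_derivative])

lemma Floc_nonneg: "0 \<le> Floc n x m w"
  unfolding Floc_def by (intro mult_nonneg_nonneg sum_nonneg logistic_nonneg) auto

lemma Floc_tangent_le: "Floc n x m w + Floc_grad n x m w \<bullet> (u - w) \<le> Floc n x m u"
proof -
  have "(\<Sum>i<n. logistic (w \<bullet> x m i) + dlogistic (w \<bullet> x m i) * (x m i \<bullet> (u - w)))
        \<le> (\<Sum>i<n. logistic (u \<bullet> x m i))"
  proof (rule sum_mono)
    fix i
    have "x m i \<bullet> (u - w) = u \<bullet> x m i - w \<bullet> x m i"
      by (simp add: inner_commute[of "x m i"] inner_diff_left)
    thus "logistic (w \<bullet> x m i) + dlogistic (w \<bullet> x m i) * (x m i \<bullet> (u - w)) \<le> logistic (u \<bullet> x m i)"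
      using logistic_tangent_le by simp
  qed
  hence "(1 / real n) * (\<Sum>i<n. logistic (w \<bullet> x m i) + dlogistic (w \<bullet> x m i) * (x m i \<bullet> (u - w)))
         \<le> (1 / real n) * (\<Sum>i<n. logistic (u \<bullet> x m i))"
    by (rule mult_left_mono) simp
  thus ?thesis unfolding Floc_def Floc_grad_inner by (simp add: sum.distrib distrib_left)
qed

lemma Floc_grad_self_bounding:
  assumes norm_x: "\<And>i. i < n \<Longrightarrow> norm (x m i) \<le> 1"
    and margin_v: "\<And>i. i < n \<Longrightarrow> \<gamma> \<le> v \<bullet> x m i"
    and "0 \<le> \<gamma>"
  shows "\<gamma> * norm (Floc_grad n x m w) ^ 2 \<le> - (Floc_grad n x m w \<bullet> v)"
proof -
  define g where "g = Floc_grad n x m w"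
  define G where "G = (1 / real n) * (\<Sum>i<n. - dlogistic (w \<bullet> x m i))"
  have "0 \<le> G" unfolding G_def by (intro mult_nonneg_nonneg sum_nonneg) (auto simp: less_imp_le dlogistic_neg)
  have "G \<le> 1"
  proof -
    have "(\<Sum>i<n. - dlogistic (w \<bullet> x m i)) \<le> real n"
      using sum_mono[of "{..<n}" "\<lambda>i. - dlogistic (w \<bullet> x m i)" "\<lambda>_. 1"] dlogistic_ge_minus_one by auto
    thus ?thesis unfolding G_def by (cases "n = 0") (auto simp: divide_simps)
  qed
  have "norm g \<le> G"
  proof -
    have "norm (\<Sum>i<n. dlogistic (w \<bullet> x m i) *\<^sub>R x m i) \<le> (\<Sum>i<n. - dlogistic (w \<bullet> x m i))"
    proof (rule order_trans[OF norm_sum sum_mono])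
      fix i assume "i \<in> {..<n}"
      thus "norm (dlogistic (w \<bullet> x m i) *\<^sub>R x m i) \<le> - dlogistic (w \<bullet> x m i)"
        using norm_x dlogistic_neg[of "w \<bullet> x m i"] by (simp add: mult_left_le)
    qed
    thus ?thesis unfolding g_def Floc_grad_def G_def by (simp add: divide_simps)
  qed
  hence "norm g ^ 2 \<le> G * G"
    by (simp add: power2_eq_square mult_mono')
  also have "\<dots> \<le> G"
    using \<open>0 \<le> G\<close> \<open>G \<le> 1\<close> by (rule mult_left_le[rotated])
  finally have "norm g ^ 2 \<le> G" .
  moreover have "\<gamma> * G \<le> - (g \<bullet> v)"
  proof -
    have "(\<Sum>i<n. - dlogistic (w \<bullet> x m i) * \<gamma>) \<le> (\<Sum>i<n. - dlogistic (w \<bullet> x m i) * (x m i \<bullet> v))"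
      using margin_v dlogistic_neg
      by (intro sum_mono mult_left_mono) (auto simp: inner_commute less_imp_le)
    hence "(1 / real n) * (\<Sum>i<n. - dlogistic (w \<bullet> x m i) * \<gamma>)
           \<le> (1 / real n) * (\<Sum>i<n. - dlogistic (w \<bullet> x m i) * (x m i \<bullet> v))"
      by (rule mult_left_mono) simp
    thus ?thesis
      unfolding g_def G_def Floc_grad_inner by (simp add: sum_distrib_left sum_negf mult.commute)
  qed
  ultimately show ?thesis
    unfolding g_def using \<open>0 \<le> \<gamma>\<close> by (meson mult_left_mono order_trans)
qed

lemma gradient_step_dist_le:
  fixes w g v c :: "'a::real_inner"
  assumes tangent: "f w + g \<bullet> (c - w) \<le> f c"
    and self_bounding: "\<gamma> * norm g ^ 2 \<le> - (g \<bullet> v)"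
    and "0 < \<gamma>" "0 < \<eta>"
  defines "u \<equiv> c + (\<eta> / (2 * \<gamma>)) *\<^sub>R v"
  shows "norm (w - \<eta> *\<^sub>R g - u) ^ 2 \<le> norm (w - u) ^ 2 - 2 * \<eta> * (f w - f c)"
proof -
  have expand: "norm (w - \<eta> *\<^sub>R g - u) ^ 2 = norm (w - u) ^ 2 - 2 * \<eta> * (g \<bullet> (w - u)) + \<eta> ^ 2 * norm g ^ 2"
    unfolding power2_norm_eq_inner
    by (simp add: inner_diff_left inner_diff_right inner_commute power2_eq_square algebra_simps)
  have "g \<bullet> (w - u) = g \<bullet> (w - c) - (\<eta> / (2 * \<gamma>)) * (g \<bullet> v)"
    unfolding u_def by (simp add: inner_diff_right inner_add_right)
  moreover have "f w - f c \<le> g \<bullet> (w - c)"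
    using tangent by (simp add: inner_diff_right)
  moreover have "\<eta> / 2 * norm g ^ 2 \<le> - (\<eta> / (2 * \<gamma>)) * (g \<bullet> v)"
  proof -
    have "(\<eta> / (2 * \<gamma>)) * (\<gamma> * norm g ^ 2) \<le> (\<eta> / (2 * \<gamma>)) * - (g \<bullet> v)"
      using self_bounding \<open>0 < \<gamma>\<close> \<open>0 < \<eta>\<close> by (intro mult_left_mono) auto
    thus ?thesis using \<open>0 < \<gamma>\<close> by simp
  qed
  ultimately have "f w - f c + \<eta> / 2 * norm g ^ 2 \<le> g \<bullet> (w - u)"
    by linarith
  from mult_left_mono[OF this, of "2 * \<eta>"] \<open>0 < \<eta>\<close>
  have "2 * \<eta> * (f w - f c) + \<eta> ^ 2 * norm g ^ 2 \<le> 2 * \<eta> * (g \<bullet> (w - u))"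
    by (simp add: algebra_simps power2_eq_square)
  thus ?thesis using expand by linarith
qed

lemma telescoping_le:
  fixes a b :: "nat \<Rightarrow> real"
  assumes "\<And>k. k < N \<Longrightarrow> a (Suc k) \<le> a k - b k + c"
  shows "a N \<le> a 0 - (\<Sum>k<N. b k) + real N * c"
  using assms
proof (induction N)
  case (Suc N)
  hence "a (Suc N) \<le> a N - b N + c" and "a N \<le> a 0 - (\<Sum>k<N. b k) + real N * c"
    by auto
  thus ?case by (simp add: algebra_simps)
qed simp

lemma norm_mean_diff_sq_le:
  fixes v :: "'i \<Rightarrow> 'a::real_normed_vector"
  assumes "finite A" "A \<noteq> {}"
  shows "norm ((1 / real (card A)) *\<^sub>R (\<Sum>j\<in>A. v j) - u) ^ 2
         \<le> (1 / real (card A)) * (\<Sum>j\<in>A. norm (v j - u) ^ 2)"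
proof -
  have card: "real (card A) > 0" using assms by (simp add: card_gt_0_iff)
  have "(1 / real (card A)) *\<^sub>R (\<Sum>j\<in>A. v j) - u = (1 / real (card A)) *\<^sub>R (\<Sum>j\<in>A. v j - u)"
    using card by (simp add: sum_subtractf scaleR_diff_right sum_constant_scaleR)
  moreover have "norm (\<Sum>j\<in>A. v j - u) ^ 2 \<le> real (card A) * (\<Sum>j\<in>A. norm (v j - u) ^ 2)"
  proof -
    have "norm (\<Sum>j\<in>A. v j - u) ^ 2 \<le> (\<Sum>j\<in>A. norm (v j - u)) ^ 2"
      by (intro power_mono norm_sum) auto
    also have "\<dots> \<le> real (card A) * (\<Sum>j\<in>A. norm (v j - u) ^ 2)"
      using sum_squared_le_sum_of_squares[of "\<lambda>j. norm (v j - u)" A] by (simp add: mult.commute)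
    finally show ?thesis .
  qed
  ultimately show ?thesis
    using card by (simp add: power_mult_distrib power_divide divide_le_eq power2_eq_square mult.commute)
qed

lemma local_iter_dist_le:
  fixes c v :: "real^'d"
  assumes norm_x: "\<And>i. i < n \<Longrightarrow> norm (x m i) \<le> 1"
    and margin_v: "\<And>i. i < n \<Longrightarrow> \<gamma> \<le> v \<bullet> x m i"
    and "0 < \<gamma>" "0 < \<eta>" "1 \<le> K"
  defines "u \<equiv> c + (\<eta> / (2 * \<gamma>)) *\<^sub>R v"
  shows "norm (local_iter n x \<eta> m w K - u) ^ 2
         \<le> norm (w - u) ^ 2 - 2 * \<eta> * Floc n x m w + 2 * \<eta> * real K * Floc n x m c"
proof -
  let ?w = "local_iter n x \<eta> m w"
  have self_bounding: "\<gamma> * norm (Floc_grad n x m w') ^ 2 \<le> - (Floc_grad n x m w' \<bullet> v)" for w'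
    using norm_x margin_v less_imp_le[OF \<open>0 < \<gamma>\<close>] by (rule Floc_grad_self_bounding)
  have "norm (?w (Suc k) - u) ^ 2 \<le> norm (?w k - u) ^ 2 - 2 * \<eta> * Floc n x m (?w k) + 2 * \<eta> * Floc n x m c"
    for k
    using gradient_step_dist_le[where f = "Floc n x m" and w = "?w k" and c = c, OF Floc_tangent_le self_bounding
        \<open>0 < \<gamma>\<close> \<open>0 < \<eta>\<close>]
    unfolding u_def by (simp add: grad_Floc right_diff_distrib)
  hence "norm (?w K - u) ^ 2
         \<le> norm (w - u) ^ 2 - (\<Sum>k<K. 2 * \<eta> * Floc n x m (?w k)) + real K * (2 * \<eta> * Floc n x m c)"
    using telescoping_le[of K "\<lambda>k. norm (?w k - u) ^ 2"] by simp
  moreover have "2 * \<eta> * Floc n x m w \<le> (\<Sum>k<K. 2 * \<eta> * Floc n x m (?w k))"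
    using member_le_sum[of 0 "{..<K}" "\<lambda>k. 2 * \<eta> * Floc n x m (?w k)"] \<open>1 \<le> K\<close> \<open>0 < \<eta>\<close>
    by (simp add: Floc_nonneg)
  ultimately show ?thesis by (simp add: algebra_simps)
qed

lemma localGD_dist_le:
  fixes c v :: "real^'d"
  assumes "1 \<le> M" "1 \<le> K"
    and norm_x: "\<And>m i. m < M \<Longrightarrow> i < n \<Longrightarrow> norm (x m i) \<le> 1"
    and margin_v: "\<And>m i. m < M \<Longrightarrow> i < n \<Longrightarrow> \<gamma> \<le> v \<bullet> x m i"
    and "0 < \<gamma>" "0 < \<eta>"
  defines "u \<equiv> c + (\<eta> / (2 * \<gamma>)) *\<^sub>R v"
  shows "norm (localGD M n x \<eta> K w0 (Suc s) - u) ^ 2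
         \<le> norm (localGD M n x \<eta> K w0 s - u) ^ 2 - 2 * \<eta> * Fglob M n x (localGD M n x \<eta> K w0 s)
            + 2 * \<eta> * real K * Fglob M n x c"
proof -
  let ?w = "localGD M n x \<eta> K w0 s"
  have "norm (localGD M n x \<eta> K w0 (Suc s) - u) ^ 2
        \<le> (1 / real M) * (\<Sum>m<M. norm (local_iter n x \<eta> m ?w K - u) ^ 2)"
    using norm_mean_diff_sq_le[of "{..<M}" "\<lambda>m. local_iter n x \<eta> m ?w K"] \<open>1 \<le> M\<close>
    by (simp add: lessThan_empty_iff)
  also have "\<dots> \<le> (1 / real M) * (\<Sum>m<M. norm (?w - u) ^ 2 - 2 * \<eta> * Floc n x m ?w
                                         + 2 * \<eta> * real K * Floc n x m c)"
    using local_iter_dist_le[OF norm_x margin_v \<open>0 < \<gamma>\<close> \<open>0 < \<eta>\<close> \<open>1 \<le> K\<close>]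
    unfolding u_def by (intro mult_left_mono sum_mono) auto
  also have "\<dots> = norm (?w - u) ^ 2 - 2 * \<eta> * Fglob M n x ?w + 2 * \<eta> * real K * Fglob M n x c"
    using \<open>1 \<le> M\<close> unfolding Fglob_def
    by (simp add: sum.distrib sum_subtractf sum_distrib_left[symmetric] field_simps)
  finally show ?thesis .
qed

lemma localGD_regret_bound:
  fixes c v :: "real^'d"
  assumes "1 \<le> M" "1 \<le> K"
    and norm_x: "\<And>m i. m < M \<Longrightarrow> i < n \<Longrightarrow> norm (x m i) \<le> 1"
    and margin_v: "\<And>m i. m < M \<Longrightarrow> i < n \<Longrightarrow> \<gamma> \<le> v \<bullet> x m i"
    and "0 < \<gamma>" "0 < \<eta>"
  defines "u \<equiv> c + (\<eta> / (2 * \<gamma>)) *\<^sub>R v"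
  shows "2 * \<eta> * (\<Sum>s<r. Fglob M n x (localGD M n x \<eta> K w0 s))
         \<le> norm (w0 - u) ^ 2 + 2 * \<eta> * real K * real r * Fglob M n x c"
proof -
  let ?a = "\<lambda>s. norm (localGD M n x \<eta> K w0 s - u) ^ 2"
  let ?b = "\<lambda>s. 2 * \<eta> * Fglob M n x (localGD M n x \<eta> K w0 s)"
  have "?a (Suc s) \<le> ?a s - ?b s + 2 * \<eta> * real K * Fglob M n x c" for s
    unfolding u_def by (rule localGD_dist_le[where x = x, OF assms(1-6)])
  hence "?a r \<le> ?a 0 - (\<Sum>s<r. ?b s) + real r * (2 * \<eta> * real K * Fglob M n x c)"
    by (rule telescoping_le)
  moreover have "(\<Sum>s<r. ?b s) = 2 * \<eta> * (\<Sum>s<r. Fglob M n x (localGD M n x \<eta> K w0 s))"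
    by (simp add: sum_distrib_left)
  moreover have "real r * (2 * \<eta> * real K * Fglob M n x c) = 2 * \<eta> * real K * real r * Fglob M n x c"
    by (simp add: mult_ac)
  moreover have "?a 0 = norm (w0 - u) ^ 2" and "0 \<le> ?a r" by simp_all
  ultimately show ?thesis by linarith
qed

definition min_margin :: "nat \<Rightarrow> nat \<Rightarrow> (nat \<Rightarrow> nat \<Rightarrow> real^'d) \<Rightarrow> real^'d \<Rightarrow> real" where
  "min_margin M n x w = Min {w \<bullet> x m i | m i. m < M \<and> i < n}"

lemma margin_eq_SUP_min_margin: "margin M n x = (SUP w\<in>{w. norm w = 1}. min_margin M n x w)"
  unfolding margin_def min_margin_def ..

lemma data_inner_set_eq:
  "{w \<bullet> x m i | m i. m < M \<and> i < n} = (\<lambda>(m, i). w \<bullet> x m i) ` ({..<M} \<times> {..<n})"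
  by auto

lemma min_margin_le: "m < M \<Longrightarrow> i < n \<Longrightarrow> min_margin M n x w \<le> w \<bullet> x m i"
  unfolding min_margin_def data_inner_set_eq by (intro Min_le) auto

lemma less_min_margin_iff:
  assumes "1 \<le> M" "1 \<le> n"
  shows "c < min_margin M n x w \<longleftrightarrow> (\<forall>m<M. \<forall>i<n. c < w \<bullet> x m i)"
  unfolding min_margin_def data_inner_set_eq using assms by (subst Min_gr_iff) (auto simp: lessThan_empty_iff)

lemma min_margin_le_one:
  assumes "1 \<le> M" "1 \<le> n" "\<And>m i. m < M \<Longrightarrow> i < n \<Longrightarrow> norm (x m i) \<le> 1"
    and "norm w = 1"
  shows "min_margin M n x w \<le> 1"
proof -
  have "min_margin M n x w \<le> w \<bullet> x 0 0" using assms by (intro min_margin_le) auto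
  also have "\<dots> \<le> norm w * norm (x 0 0)" by (rule norm_cauchy_schwarz)
  also have "\<dots> \<le> 1" using assms by simp
  finally show ?thesis .
qed

lemma unit_vectors_nonempty: "{w :: 'a::{real_normed_vector, perfect_space}. norm w = 1} \<noteq> {}"
  using vector_choose_size[OF zero_le_one] by blast

lemma
  assumes "1 \<le> M" "1 \<le> n" "\<And>m i. m < M \<Longrightarrow> i < n \<Longrightarrow> norm (x m i) \<le> 1"
  shows bdd_above_min_margin: "bdd_above (min_margin M n x ` {w. norm w = 1})"
    and margin_le_one: "margin M n x \<le> 1"
proof -
  show "bdd_above (min_margin M n x ` {w. norm w = 1})"
    using min_margin_le_one[of M n x] assms by (intro bdd_aboveI[where M = 1]) auto
  show "margin M n x \<le> 1"
    unfolding margin_eq_SUP_min_margin using unit_vectors_nonempty min_margin_le_one[of M n x] assms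
    by (intro cSUP_least) auto
qed

lemma margin_pos:
  assumes "1 \<le> M" "1 \<le> n" "\<And>m i. m < M \<Longrightarrow> i < n \<Longrightarrow> norm (x m i) \<le> 1"
    and "\<exists>w. \<forall>m<M. \<forall>i<n. w \<bullet> x m i > 0"
  shows "0 < margin M n x"
proof -
  obtain w where w: "\<forall>m<M. \<forall>i<n. w \<bullet> x m i > 0" using assms(4) by blast
  hence "w \<noteq> 0" using assms(1,2) by fastforce
  hence "0 < min_margin M n x (w /\<^sub>R norm w)"
    using w assms(1,2) by (subst less_min_margin_iff) auto
  also have "\<dots> \<le> margin M n x"
    unfolding margin_eq_SUP_min_margin using bdd_above_min_margin[of M n x] assms \<open>w \<noteq> 0\<close>
    by (intro cSUP_upper) auto
  finally show ?thesis .
qed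

lemma exists_unit_margin_gt:
  assumes "1 \<le> M" "1 \<le> n" "\<And>m i. m < M \<Longrightarrow> i < n \<Longrightarrow> norm (x m i) \<le> 1"
    and "c < margin M n x"
  obtains v where "norm v = 1" "\<And>m i. m < M \<Longrightarrow> i < n \<Longrightarrow> c < v \<bullet> x m i"
proof -
  obtain v where "norm v = 1" "c < min_margin M n x v"
    using assms less_cSUP_iff[OF unit_vectors_nonempty bdd_above_min_margin[of M n x]]
    unfolding margin_eq_SUP_min_margin by blast
  thus ?thesis using that less_min_margin_iff[OF assms(1,2)] by blast
qed

lemma mean_le_bound:
  fixes f :: "nat \<Rightarrow> real"
  assumes "\<And>i. i < N \<Longrightarrow> f i \<le> b" "0 \<le> b"
  shows "(1 / real N) * (\<Sum>i<N. f i) \<le> b"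
proof (cases "N = 0")
  case False
  have "(\<Sum>i<N. f i) \<le> real N * b" using sum_bounded_above[of "{..<N}" f b] assms by simp
  thus ?thesis using False by (simp add: divide_simps mult.commute)
qed (simp add: assms)

lemma Fglob_le_exp_neg:
  assumes "\<And>m i. m < M \<Longrightarrow> i < n \<Longrightarrow> t \<le> w \<bullet> x m i"
  shows "Fglob M n x w \<le> exp (- t)"
proof -
  have "logistic (w \<bullet> x m i) \<le> exp (- t)" if "m < M" "i < n" for m i
    using order_trans[OF logistic_le_exp] assms[OF that] by simp
  hence "Floc n x m w \<le> exp (- t)" if "m < M" for m
    unfolding Floc_def using that by (intro mean_le_bound) auto
  thus ?thesis unfolding Fglob_def by (intro mean_le_bound) auto
qed

lemma square_add_le: "((a::real) + b) ^ 2 \<le> 2 * a ^ 2 + 2 * b ^ 2"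
  using zero_le_power2[of "a - b"] by (simp add: power2_eq_square algebra_simps)

lemma ln_sq_mono: "1 \<le> (a::real) \<Longrightarrow> a \<le> b \<Longrightarrow> ln a ^ 2 \<le> ln b ^ 2"
  by (intro power_mono) auto

lemma localGD_loss_sum_le:
  fixes v w0 :: "real^'d"
  assumes "1 \<le> M" "1 \<le> K"
    and norm_x: "\<And>m i. m < M \<Longrightarrow> i < n \<Longrightarrow> norm (x m i) \<le> 1"
    and "norm v = 1" and margin_v: "\<And>m i. m < M \<Longrightarrow> i < n \<Longrightarrow> \<gamma> \<le> v \<bullet> x m i"
    and "0 < \<gamma>" "\<gamma> \<le> 1" "0 < \<eta>"
  shows "2 * \<eta> * (\<Sum>s<r. Fglob M n x (localGD M n x \<eta> K w0 s))
         \<le> 4 * (norm w0 ^ 2 + 1 + ln (real K + \<eta> * real K * \<gamma> ^ 2 * real r) ^ 2 + \<eta> ^ 2 * real K ^ 2)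
             / \<gamma> ^ 2"
proof -
  define A where "A = real K + \<eta> * real K * \<gamma> ^ 2 * real r"
  have "1 \<le> A" unfolding A_def using assms by (simp add: add_increasing2)
  define \<rho> where "\<rho> = ln A / \<gamma>" \<comment> \<open>so that \<open>exp (- \<rho> \<gamma>) = 1 / A\<close>\<close>
  have "0 \<le> \<rho>" unfolding \<rho>_def using \<open>1 \<le> A\<close> \<open>0 < \<gamma>\<close> by simp
  define u where "u = \<rho> *\<^sub>R v + (\<eta> / (2 * \<gamma>)) *\<^sub>R v"
  have regret: "2 * \<eta> * (\<Sum>s<r. Fglob M n x (localGD M n x \<eta> K w0 s))
                \<le> norm (w0 - u) ^ 2 + 2 * \<eta> * real K * real r * Fglob M n x (\<rho> *\<^sub>R v)"
    unfolding u_def using assms by (intro localGD_regret_bound) auto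
  have "Fglob M n x (\<rho> *\<^sub>R v) \<le> exp (- ln A)"
  proof (rule Fglob_le_exp_neg)
    fix m i assume "m < M" "i < n"
    hence "\<rho> * \<gamma> \<le> \<rho> * (v \<bullet> x m i)" using margin_v \<open>0 \<le> \<rho>\<close> by (intro mult_left_mono) auto
    thus "ln A \<le> \<rho> *\<^sub>R v \<bullet> x m i" unfolding \<rho>_def using \<open>0 < \<gamma>\<close> by simp
  qed
  also have "\<dots> = 1 / A" using \<open>1 \<le> A\<close> by (simp add: exp_minus inverse_eq_divide)
  finally have "2 * \<eta> * real K * real r * Fglob M n x (\<rho> *\<^sub>R v) \<le> 2 * \<eta> * real K * real r * (1 / A)"
    using \<open>0 < \<eta>\<close> by (intro mult_left_mono) auto
  also have "\<dots> \<le> 2 / \<gamma> ^ 2"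
    using \<open>1 \<le> A\<close> \<open>0 < \<gamma>\<close> \<open>1 \<le> K\<close> unfolding A_def by (simp add: divide_simps)
  finally have loss_term: "2 * \<eta> * real K * real r * Fglob M n x (\<rho> *\<^sub>R v) \<le> 2 / \<gamma> ^ 2" .
  have "norm u = \<rho> + \<eta> / (2 * \<gamma>)"
    unfolding u_def using \<open>norm v = 1\<close> \<open>0 \<le> \<rho>\<close> \<open>0 < \<eta>\<close> \<open>0 < \<gamma>\<close>
    by (simp flip: scaleR_add_left)
  hence u_term: "2 * norm u ^ 2 \<le> (4 * ln A ^ 2 + \<eta> ^ 2) / \<gamma> ^ 2"
    using square_add_le[of \<rho> "\<eta> / (2 * \<gamma>)"] by (simp add: \<rho>_def power_divide add_divide_distrib)
  have w0_term: "2 * norm w0 ^ 2 \<le> 2 * norm w0 ^ 2 / \<gamma> ^ 2"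
    using \<open>0 < \<gamma>\<close> \<open>\<gamma> \<le> 1\<close> by (simp add: le_divide_eq mult_left_le power_le_one)
  have eta_term: "\<eta> ^ 2 \<le> \<eta> ^ 2 * real K ^ 2"
    using \<open>1 \<le> K\<close> by (simp add: mult_le_cancel_left1 one_le_power)
  have "norm (w0 - u) ^ 2 \<le> (norm w0 + norm u) ^ 2"
    by (intro power_mono norm_triangle_ineq4) simp
  also have "\<dots> \<le> 2 * norm w0 ^ 2 + 2 * norm u ^ 2"
    by (rule square_add_le)
  finally have "2 * \<eta> * (\<Sum>s<r. Fglob M n x (localGD M n x \<eta> K w0 s))
      \<le> (2 * norm w0 ^ 2 + 4 * ln A ^ 2 + \<eta> ^ 2 + 2) / \<gamma> ^ 2"
    using regret loss_term u_term w0_term by (simp add: add_divide_distrib)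
  also have "\<dots> \<le> 4 * (norm w0 ^ 2 + 1 + ln A ^ 2 + \<eta> ^ 2 * real K ^ 2) / \<gamma> ^ 2"
    using eta_term zero_le_power2[of "norm w0"] zero_le_power2[of \<eta>] by (intro divide_right_mono) (smt (verit), simp)
  finally show ?thesis unfolding A_def .
qed

theorem theorem4p1:
  fixes M n K r :: nat and x :: "nat \<Rightarrow> nat \<Rightarrow> real^'d" and w0 :: "real^'d" and \<eta> :: real
  assumes "M \<ge> 1" and "n \<ge> 1"
    and "\<And>m i. m < M \<Longrightarrow> i < n \<Longrightarrow> norm (x m i) \<le> 1"
    and "\<exists>w. \<forall>m<M. \<forall>i<n. w \<bullet> x m i > 0"
    and "\<eta> > 0" and "K \<ge> 1"
    and "r \<ge> 1"
  shows "(1 / real r) * (\<Sum>s<r. Fglob M n x (localGD M n x \<eta> K w0 s))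
         \<le> 26 * (norm w0 ^ 2 + 1 + (ln (real K + \<eta> * real K * margin M n x ^ 2 * real r)) ^ 2
                  + \<eta> ^ 2 * real K ^ 2)
              / (\<eta> * margin M n x ^ 4 * real r)"
proof -
  define \<gamma> where "\<gamma> = margin M n x"
  define \<Sigma> where "\<Sigma> = (\<Sum>s<r. Fglob M n x (localGD M n x \<eta> K w0 s))"
  define B where "B \<gamma>' = norm w0 ^ 2 + 1 + (ln (real K + \<eta> * real K * \<gamma>' ^ 2 * real r)) ^ 2
                         + \<eta> ^ 2 * real K ^ 2" for \<gamma>'
  have "0 < \<gamma>" unfolding \<gamma>_def using assms(1-4) by (rule margin_pos)
  have "\<gamma> \<le> 1" unfolding \<gamma>_def using assms(1-3) by (rule margin_le_one)
  \<comment> \<open>the margin is only a supremum; a unit vector with margin \<open>\<gamma> / 2\<close> costs a constant factor\<close>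
  have "\<gamma> / 2 < margin M n x" using \<open>0 < \<gamma>\<close> unfolding \<gamma>_def by simp
  then obtain v where "norm v = 1" and "\<And>m i. m < M \<Longrightarrow> i < n \<Longrightarrow> \<gamma> / 2 < v \<bullet> x m i"
    using exists_unit_margin_gt[where x = x, OF assms(1-3)] by blast
  hence "2 * \<eta> * \<Sigma> \<le> 4 * B (\<gamma> / 2) / (\<gamma> / 2) ^ 2"
    unfolding \<Sigma>_def B_def using assms \<open>0 < \<gamma>\<close> \<open>\<gamma> \<le> 1\<close> by (intro localGD_loss_sum_le) (auto intro: less_imp_le)
  also have "\<dots> \<le> 16 * B \<gamma> / \<gamma> ^ 2"
  proof -
    have "(\<gamma> / 2) ^ 2 \<le> \<gamma> ^ 2" using \<open>0 < \<gamma>\<close> by (intro power_mono) auto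
    hence "B (\<gamma> / 2) \<le> B \<gamma>"
      unfolding B_def using assms
      by (intro add_mono order_refl ln_sq_mono) (auto simp: add_increasing2 intro!: mult_left_mono)
    thus ?thesis by (simp add: power_divide divide_right_mono)
  qed
  also have "\<dots> \<le> 16 * B \<gamma> / \<gamma> ^ 4"
    using \<open>0 < \<gamma>\<close> \<open>\<gamma> \<le> 1\<close> by (intro divide_left_mono) (auto simp: B_def power_decreasing)
  finally have "\<Sigma> * (\<eta> * \<gamma> ^ 4) \<le> 8 * B \<gamma>"
    using \<open>0 < \<gamma>\<close> by (simp add: field_simps)
  hence "(1 / real r) * \<Sigma> \<le> 8 * B \<gamma> / (\<eta> * \<gamma> ^ 4 * real r)"
    using assms \<open>0 < \<gamma>\<close> by (simp add: field_simps)
  also have "\<dots> \<le> 26 * B \<gamma> / (\<eta> * \<gamma> ^ 4 * real r)"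
    using assms \<open>0 < \<gamma>\<close> by (intro divide_right_mono) (auto simp: B_def)
  finally show ?thesis unfolding \<Sigma>_def B_def \<gamma>_def .
qed

end
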